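(* Let $\lambda$ be a partition with exactly two parts. Then $C_\lambda(q,t)=C_\lambda(t,q)$.
   Context: For a vector $\vec{k}=(k_1,\dots,k_n)$ of positive integers, $\lambda(\vec{k})$ denotes the partition obtained by sorting its entries decreasingly, and $|\vec{k}|=\sum k_i$. A $\vec{k}$-Dyck path is a word $D=\sigma_1\cdots\sigma_N$, $N=|\vec{k}|+n$, with $n$ red arrows and $|\vec{k}|$ blue arrows $W$, the $j$-th red arrow from the left being $S^{k_j}$ of value $k_j$, each $W$ of value $-1$; ranks $r_1=0$, $r_{m+1}=r_m+(\text{value of }\sigma_m)$ must all be $\ge0$. Starting rank $r(\sigma_m)=r_m$, end rank $\dot r(\sigma_m)=r_{m+1}$; $A<B$ means $A$ is left of $B$. $\mathcal{D}_{\vec{k}}$ is the set of $\vec{k}$-Dyck paths. $\operatorname{area}(D)=\sum_S r(S)$ over red arrows $S$. $\operatorname{dinv}(D)$ = (number of pairs (blue $W$, red $S$) with $W<S$ and $W$ sweeping $S$, i.e. $W$ meets $S$ when moved right past $S$ along a line of slope $0<\epsilon\ll1$, equivalently $r(S)\le r(W)\le\dot r(S)$) $+\sum_{S_i<S_j}\chi(r(S_i)\ge r(S_j)\ \&\ \dot r(S_j)>\dot r(S_i))(\dot r(S_j)-\dot r(S_i))+\sum_{S_i<S_j}\chi(r(S_i)<r(S_j)\ \&\ \dot r(S_j)<\dot r(S_i))(\dot r(S_i)-\dot r(S_j))$ over pairs of red arrows. For a partition $\lambda$, $C_\lambda(q,t)=\sum_{\vec{k}:\ \lambda(\vec{k})=\lambda}\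 \sum_{D\in\mathcal{D}_{\vec{k}}} q^{\operatorname{dinv}(D)}t^{\operatorname{area}(D)}$, the outer sum over all vectors $\vec{k}$ whose entries rearrange to $\lambda$. *)

theory Defs
  imports Main
begin

text \<open>A step of a path: a red arrow S^k (value k) or a blue arrow W (value -1).\<close>
datatype step = Red nat | Blue

fun step_val :: "step \<Rightarrow> int" where
  "step_val (Red k) = int k"
| "step_val Blue = -1"

fun is_red :: "step \<Rightarrow> bool" where
  "is_red (Red k) = True"
| "is_red Blue = False"

fun red_val :: "step \<Rightarrow> nat" where
  "red_val (Red k) = k"
| "red_val Blue = 0"

text \<open>Rank r_{m+1} (0-indexed: rank D m is the starting rank of step D!m;
  rank D (m+1) is its end rank).\<close>
definition rank :: "step list \<Rightarrow> nat \<Rightarrow> int" where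
  "rank D m = (\<Sum>i<m. step_val (D ! i))"

definition dyck_paths :: "nat list \<Rightarrow> step list set" where
  "dyck_paths k = {D. map red_val (filter is_red D) = k
                     \<and> length (filter (\<lambda>s. s = Blue) D) = sum_list k
                     \<and> (\<forall>m\<le>length D. rank D m \<ge> 0)}"

definition area :: "step list \<Rightarrow> int" where
  "area D = (\<Sum>m | m < length D \<and> is_red (D ! m). rank D m)"

definition dinv :: "step list \<Rightarrow> int" where
  "dinv D =
     int (card {(a, b). a < b \<and> b < length D \<and> D ! a = Blue \<and> is_red (D ! b)
                  \<and> rank D b \<le> rank D a \<and> rank D a \<le> rank D (Suc b)})
   + (\<Sum>(i, j) | i < j \<and> j < length D \<and> is_red (D ! i) \<and> is_red (D ! j).
        (if rank D i \<ge> rank D j \<and> rank D (Suc j) > rank D (Suc i)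
         then rank D (Suc j) - rank D (Suc i) else 0)
      + (if rank D i < rank D j \<and> rank D (Suc j) < rank D (Suc i)
         then rank D (Suc i) - rank D (Suc j) else 0))"

definition is_partition :: "nat list \<Rightarrow> bool" where
  "is_partition lam \<longleftrightarrow> sorted_wrt (\<ge>) lam \<and> (\<forall>x\<in>set lam. 0 < x)"

definition part_of :: "nat list \<Rightarrow> nat list" where
  "part_of k = rev (sort k)"

definition C_poly :: "nat list \<Rightarrow> 'a::comm_semiring_1 \<Rightarrow> 'a \<Rightarrow> 'a" where
  "C_poly lam q t =
     (\<Sum>k\<in>{k. part_of k = lam}. \<Sum>D\<in>dyck_paths k. q ^ nat (dinv D) * t ^ nat (area D))"

end

theory Submission
  imports Defs
begin

text \<open>A Dyck path for the vector (k1, k2) must start with its red arrow S^k1 (a blue first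
  step would reach rank -1), so it is S^k1 W^i S^k2 W^(k1+k2-i), and nonnegativity of the rank
  before S^k2 means i \<le> k1. For this path the area is k1 - i, and the dinv is i when i < k1
  and k2 when i = k1. Hence the vector (k1, k2) contributes
  q^k2 + \<Sum>i<k1. q^i t^(k1-i), and adding the contribution of (k2, k1) (when k1 \<noteq> k2) gives
  h_k1(q,t) + h_k2(q,t), where h_k(q,t) = \<Sum>i\<le>k. q^i t^(k-i) is symmetric in q and t.\<close>

lemma rank_0 [simp]: "rank D 0 = 0"
  by (simp add: rank_def)

lemma rank_Suc: "rank D (Suc m) = rank D m + step_val (D ! m)"
  by (simp add: rank_def)

lemma eq_replicate_Blue_if_not_red:
  "\<forall>s\<in>set xs. \<not> is_red s \<Longrightarrow> xs = replicate (length xs) Blue"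
proof (induction xs)
  case (Cons s xs)
  then show ?case by (cases s) auto
qed simp

lemma first_step_not_Blue:
  assumes "\<forall>m\<le>length D. rank D m \<ge> 0" and "D \<noteq> []"
  shows "D ! 0 \<noteq> Blue"
proof
  assume "D ! 0 = Blue"
  then have "rank D 1 = -1"
    by (simp add: rank_def)
  moreover have "1 \<le> length D"
    using assms(2) by (simp add: Suc_le_eq)
  ultimately show False
    using assms(1) by fastforce
qed

definition two_red_path :: "nat \<Rightarrow> nat \<Rightarrow> nat \<Rightarrow> step list" where
  "two_red_path k1 k2 i = Red k1 # replicate i Blue @ Red k2 # replicate (k1 + k2 - i) Blue"

lemma length_two_red_path:
  "i \<le> k1 + k2 \<Longrightarrow> length (two_red_path k1 k2 i) = k1 + k2 + 2"
  by (simp add: two_red_path_def)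

lemma nth_two_red_path:
  "m < length (two_red_path k1 k2 i) \<Longrightarrow>
   two_red_path k1 k2 i ! m = (if m = 0 then Red k1 else if m = Suc i then Red k2 else Blue)"
  by (auto simp: two_red_path_def nth_append nth_Cons split: nat.split)

lemma rank_two_red_path:
  assumes "i \<le> k1 + k2" and "m \<le> k1 + k2 + 2"
  shows "rank (two_red_path k1 k2 i) m =
    (if m = 0 then 0 else if m \<le> i + 1 then int k1 + 1 - int m else int (k1 + k2 + 2) - int m)"
  using assms(2)
proof (induction m)
  case (Suc m)
  then have "m < length (two_red_path k1 k2 i)"
    using assms(1) length_two_red_path by simp
  with Suc show ?case
    by (auto simp: rank_Suc nth_two_red_path)
qed simp

lemma two_red_path_in_dyck_paths:
  assumes "i \<le> k1"
  shows "two_red_path k1 k2 i \<in> dyck_paths [k1, k2]"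
proof -
  have "rank (two_red_path k1 k2 i) m \<ge> 0" if "m \<le> length (two_red_path k1 k2 i)" for m
    using that assms rank_two_red_path[of i k1 k2 m] length_two_red_path[of i k1 k2] by auto
  then show ?thesis
    using assms by (simp add: dyck_paths_def two_red_path_def filter_replicate)
qed

lemma dyck_paths_two_imp_two_red_path:
  assumes "D \<in> dyck_paths [k1, k2]"
  obtains i where "i \<le> k1" and "D = two_red_path k1 k2 i"
proof -
  have reds: "map red_val (filter is_red D) = [k1, k2]"
    and blues: "length (filter (\<lambda>s. s = Blue) D) = k1 + k2"
    and nonneg: "\<forall>m\<le>length D. rank D m \<ge> 0"
    using assms by (auto simp: dyck_paths_def)
  obtain s1 s2 where s: "filter is_red D = [s1, s2]" "red_val s1 = k1" "red_val s2 = k2"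
    using reds by auto
  obtain xs vs where D: "D = xs @ s1 # vs" "\<forall>s\<in>set xs. \<not> is_red s" "is_red s1"
    and vs: "[s2] = filter is_red vs"
    using filter_eq_ConsD[OF s(1)] by blast
  obtain ys zs where vs_eq: "vs = ys @ s2 # zs" "\<forall>s\<in>set ys. \<not> is_red s" "is_red s2"
    and "[] = filter is_red zs"
    using filter_eq_ConsD[OF vs[symmetric]] by blast
  then have zs: "\<forall>s\<in>set zs. \<not> is_red s"
    by (metis filter_empty_conv)
  have "s1 = Red k1" "s2 = Red k2"
    using D(3) vs_eq(3) s(2,3) by (cases s1; cases s2; simp)+
  then have D_blocks: "D = replicate (length xs) Blue @ Red k1 #
      replicate (length ys) Blue @ Red k2 # replicate (length zs) Blue"
    using D vs_eq eq_replicate_Blue_if_not_red[OF D(2)] eq_replicate_Blue_if_not_red[OF vs_eq(2)]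
      eq_replicate_Blue_if_not_red[OF zs]
    by simp
  have "xs = []"
    using first_step_not_Blue[OF nonneg] D_blocks by (cases xs) auto
  moreover have "length xs + length ys + length zs = k1 + k2"
    using blues D_blocks by (simp add: filter_replicate)
  ultimately have D_path: "D = two_red_path k1 k2 (length ys)"
    and ys_le: "length ys \<le> k1 + k2"
    using D_blocks by (auto simp: two_red_path_def)
  have "rank D (length ys + 1) \<ge> 0"
    using nonneg D_blocks by simp
  then have "length ys \<le> k1"
    using rank_two_red_path[OF ys_le, of "length ys + 1"] D_path ys_le by simp
  with D_path show thesis
    using that by blast
qed

lemma dyck_paths_two: "dyck_paths [k1, k2] = two_red_path k1 k2 ` {..k1}"
  by (fastforce intro: two_red_path_in_dyck_paths elim: dyck_paths_two_imp_two_red_path)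

lemma inj_on_two_red_path: "inj_on (two_red_path k1 k2) {..k1}"
proof (rule inj_onI)
  fix i j
  assume "two_red_path k1 k2 i = two_red_path k1 k2 j"
  then have "length (takeWhile (\<lambda>s. s = Blue) (tl (two_red_path k1 k2 i)))
           = length (takeWhile (\<lambda>s. s = Blue) (tl (two_red_path k1 k2 j)))"
    by simp
  then show "i = j"
    by (simp add: two_red_path_def takeWhile_append)
qed

lemma area_two_red_path:
  assumes "i \<le> k1"
  shows "area (two_red_path k1 k2 i) = int k1 - int i"
proof -
  let ?D = "two_red_path k1 k2 i"
  have "{m. m < length ?D \<and> is_red (?D ! m)} = {0, Suc i}"
    using assms length_two_red_path[of i k1 k2] nth_two_red_path[of _ k1 k2 i]
    by (auto split: if_splits)
  then show ?thesis
    using assms rank_two_red_path[of i k1 k2] by (simp add: area_def)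
qed

lemma sweeping_pairs_two_red_path:
  fixes k1 k2 i :: nat
  assumes "i \<le> k1"
  defines "D \<equiv> two_red_path k1 k2 i"
  shows "{(a, b). a < b \<and> b < length D \<and> D ! a = Blue \<and> is_red (D ! b)
                \<and> rank D b \<le> rank D a \<and> rank D a \<le> rank D (Suc b)}
       = (\<lambda>a. (a, Suc i)) ` {max 1 (i + 1 - k2)..i}"
    (is "?sweep = _")
proof -
  have len: "length D = k1 + k2 + 2"
    using assms length_two_red_path by simp
  have nth: "m < k1 + k2 + 2 \<Longrightarrow>
      D ! m = (if m = 0 then Red k1 else if m = Suc i then Red k2 else Blue)" for m
    using nth_two_red_path len unfolding D_def by simp
  have rank: "m \<le> k1 + k2 + 2 \<Longrightarrow> rank D m =
      (if m = 0 then 0 else if m \<le> i + 1 then int k1 + 1 - int m else int (k1 + k2 + 2) - int m)"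
    for m
    using assms rank_two_red_path[of i k1 k2 m] by simp
  have "(a, b) \<in> ?sweep \<longleftrightarrow> b = Suc i \<and> max 1 (i + 1 - k2) \<le> a \<and> a \<le> i" for a b
  proof
    assume "(a, b) \<in> ?sweep"
    then have ab: "a < b" "b < k1 + k2 + 2" "D ! a = Blue" "is_red (D ! b)"
      "rank D a \<le> rank D (Suc b)"
      using len by auto
    then have b: "b = Suc i"
      using nth[of b] by (auto split: if_splits)
    with ab have "a \<noteq> 0" "a \<le> i"
      using nth[of a] by (auto split: if_splits)
    with ab(2,5) b show "b = Suc i \<and> max 1 (i + 1 - k2) \<le> a \<and> a \<le> i"
      using rank[of a] rank[of "Suc b"] by (auto split: if_splits)
  next
    assume "b = Suc i \<and> max 1 (i + 1 - k2) \<le> a \<and> a \<le> i"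
    then show "(a, b) \<in> ?sweep"
      using assms nth[of a] nth[of b] rank[of a] rank[of b] rank[of "Suc b"] len by auto
  qed
  then show ?thesis
    by auto
qed

lemma red_pairs_two_red_path:
  fixes k1 k2 i :: nat
  assumes "i \<le> k1"
  defines "D \<equiv> two_red_path k1 k2 i"
  shows "{(a, b). a < b \<and> b < length D \<and> is_red (D ! a) \<and> is_red (D ! b)} = {(0, Suc i)}"
  using assms length_two_red_path[of i k1 k2] nth_two_red_path[of _ k1 k2 i]
  by (auto split: if_splits)

lemma dinv_two_red_path:
  assumes "i \<le> k1"
  shows "dinv (two_red_path k1 k2 i) = (if i < k1 then int i else int k2)"
proof -
  let ?D = "two_red_path k1 k2 i"
  have "card ((\<lambda>a. (a, Suc i)) ` {max 1 (i + 1 - k2)..i}) = min i k2"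
    by (subst card_image) (auto simp: inj_on_def)
  moreover have "rank ?D 1 = int k1" "rank ?D (Suc i) = int k1 - int i"
    "rank ?D (Suc (Suc i)) = int k1 - int i + int k2"
    using assms rank_two_red_path[of i k1 k2] by auto
  ultimately show ?thesis
    using assms
    by (auto simp: dinv_def sweeping_pairs_two_red_path red_pairs_two_red_path)
qed

lemma dyck_paths_two_generating_function:
  fixes q t :: "'a::comm_semiring_1"
  shows "(\<Sum>D\<in>dyck_paths [k1, k2]. q ^ nat (dinv D) * t ^ nat (area D))
       = (\<Sum>i<k1. q ^ i * t ^ (k1 - i)) + q ^ k2"
proof -
  have "(\<Sum>D\<in>dyck_paths [k1, k2]. q ^ nat (dinv D) * t ^ nat (area D))
      = (\<Sum>i\<le>k1. q ^ nat (dinv (two_red_path k1 k2 i)) * t ^ nat (area (two_red_path k1 k2 i)))"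
    by (simp add: dyck_paths_two sum.reindex[OF inj_on_two_red_path])
  also have "\<dots> = (\<Sum>i\<le>k1. if i < k1 then q ^ i * t ^ (k1 - i) else q ^ k2)"
    by (rule sum.cong) (auto simp: dinv_two_red_path area_two_red_path nat_diff_distrib)
  also have "\<dots> = (\<Sum>i<k1. q ^ i * t ^ (k1 - i)) + q ^ k2"
    by (simp flip: lessThan_Suc_atMost)
  finally show ?thesis .
qed

definition complete_homogeneous2 :: "nat \<Rightarrow> 'a::comm_semiring_1 \<Rightarrow> 'a \<Rightarrow> 'a" where
  "complete_homogeneous2 k q t = (\<Sum>i\<le>k. q ^ i * t ^ (k - i))"

lemma complete_homogeneous2_commute:
  "complete_homogeneous2 k q t = complete_homogeneous2 k t q"
proof -
  have "complete_homogeneous2 k q t = (\<Sum>i=0..k. q ^ i * t ^ (k - i))"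
    by (simp add: complete_homogeneous2_def atLeast0AtMost)
  also have "\<dots> = (\<Sum>i=0..k. q ^ (k - i) * t ^ (k - (k - i)))"
    by (subst sum.atLeastAtMost_rev) simp
  also have "\<dots> = complete_homogeneous2 k t q"
    by (auto simp: complete_homogeneous2_def atLeast0AtMost mult.commute intro!: sum.cong)
  finally show ?thesis .
qed

lemma complete_homogeneous2_eq:
  "complete_homogeneous2 k q t = (\<Sum>i<k. q ^ i * t ^ (k - i)) + q ^ k"
  by (simp add: complete_homogeneous2_def flip: lessThan_Suc_atMost)

lemma part_of_eq_two:
  assumes "b \<le> a"
  shows "{k. part_of k = [a, b]} = {[a, b], [b, a]}"
proof (intro set_eqI iffI)
  fix k
  assume "k \<in> {k. part_of k = [a, b]}"
  then have sorted: "rev (sort k) = [a, b]"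
    by (simp add: part_of_def)
  then have "length k = 2"
    by (metis length_rev length_sort length_Cons list.size(3) numeral_2_eq_2)
  then obtain x y where "k = [x, y]"
    by (metis (no_types, lifting) One_nat_def Suc_1 length_0_conv length_Suc_conv)
  then show "k \<in> {[a, b], [b, a]}"
    using sorted by (auto split: if_splits)
next
  fix k
  assume "k \<in> {[a, b], [b, a]}"
  then show "k \<in> {k. part_of k = [a, b]}"
    using assms by (auto simp: part_of_def)
qed

lemma C_poly_two_parts:
  fixes q t :: "'a::comm_semiring_1"
  assumes "b \<le> a"
  shows "C_poly [a, b] q t =
    (if a = b then complete_homogeneous2 a q t
     else complete_homogeneous2 a q t + complete_homogeneous2 b q t)"
  using assms
  by (simp add: C_poly_def part_of_eq_two dyck_paths_two_generating_function
      complete_homogeneous2_eq ac_simps)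

theorem mainTheorem3:
  fixes lam :: "nat list" and q t :: "'a::comm_semiring_1"
  assumes "is_partition lam" and "length lam = 2"
  shows "C_poly lam q t = C_poly lam t q"
proof -
  obtain a b where lam: "lam = [a, b]"
    using assms(2) by (metis (no_types, lifting) One_nat_def Suc_1 length_0_conv length_Suc_conv)
  then have "b \<le> a"
    using assms(1) by (simp add: is_partition_def)
  then show ?thesis
    by (simp add: lam C_poly_two_parts complete_homogeneous2_commute[of _ q t])
qed

end
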